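(* Let $R$ be a ring satisfying the ascending chain condition on left annihilators, let $\mathbb S=R[X^{\pm1};\boldsymbol\alpha]$ be a skew Laurent polynomial ring of bijective type, let $\mathcal T$ be a submonoid of the free abelian group $G_X$, and let $A=R[\mathcal T;\boldsymbol\alpha]=\bigoplus_{\tau\in\mathcal T}R\tau\subseteq\mathbb S$. If $R$ is prime, then $A$ is prime; if $R$ is semiprime, then $A$ is semiprime.
   Context: Skew Laurent polynomial ring of bijective type: $X$ is a set of commuting variables, $G_X$ is the free abelian group on $X$, and $\mathbb S=R[X^{\pm1};\boldsymbol\alpha]$ is the ring which is a free left $R$-module with basis $G_X$, terms multiplying as in $G_X$, and for each $x\in X$ a ring automorphism $\alpha_x$ of $R$ with $xa=\alpha_x(a)x$, $x^{-1}a=\alpha_x^{-1}(a)x^{-1}$ for $a\in R$. *)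

theory Defs
  imports Main "HOL-Library.Poly_Mapping"
begin

definition ring_aut :: "('a::ring_1 \<Rightarrow> 'a) \<Rightarrow> bool" where
  "ring_aut f \<longleftrightarrow> bij f \<and> (\<forall>a b. f (a + b) = f a + f b) \<and> (\<forall>a b. f (a * b) = f a * f b) \<and> f 1 = 1"

definition left_ann :: "'a::ring_1 set \<Rightarrow> 'a set" where
  "left_ann S = {r. \<forall>s\<in>S. r * s = 0}"

definition acc_left_ann :: "'a::ring_1 itself \<Rightarrow> bool" where
  "acc_left_ann _ \<longleftrightarrow>
     (\<forall>C :: nat \<Rightarrow> 'a set. (\<forall>n. \<exists>S. C n = left_ann S) \<and> (\<forall>n. C n \<subseteq> C (Suc n))
        \<longrightarrow> (\<exists>N. \<forall>n\<ge>N. C n = C N))"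

definition prime_ring_on :: "'b set \<Rightarrow> ('b \<Rightarrow> 'b \<Rightarrow> 'b) \<Rightarrow> 'b \<Rightarrow> bool" where
  "prime_ring_on A mult z \<longleftrightarrow>
     (\<forall>a\<in>A. \<forall>b\<in>A. (\<forall>c\<in>A. mult (mult a c) b = z) \<longrightarrow> a = z \<or> b = z)"

definition semiprime_ring_on :: "'b set \<Rightarrow> ('b \<Rightarrow> 'b \<Rightarrow> 'b) \<Rightarrow> 'b \<Rightarrow> bool" where
  "semiprime_ring_on A mult z \<longleftrightarrow>
     (\<forall>a\<in>A. (\<forall>c\<in>A. mult (mult a c) a = z) \<longrightarrow> a = z)"

definition aut_pow :: "('a \<Rightarrow> 'a) \<Rightarrow> int \<Rightarrow> 'a \<Rightarrow> 'a" where
  "aut_pow f k = (if 0 \<le> k then f ^^ nat k else inv f ^^ nat (- k))"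

text \<open>The free abelian group G_X on X is the type of finitely supported maps x to int.  The action of
  g = \<Prod> x^(g x) on R:  alpha^g = composition of alpha_x^(g x) over the support
  (well defined as the alpha_x commute).\<close>
definition alpha_act :: "('x \<Rightarrow> 'a \<Rightarrow> 'a) \<Rightarrow> ('x \<Rightarrow>\<^sub>0 int) \<Rightarrow> 'a \<Rightarrow> 'a" where
  "alpha_act \<alpha> g = Finite_Set.fold (\<lambda>x f. aut_pow (\<alpha> x) (Poly_Mapping.lookup g x) \<circ> f) id (Poly_Mapping.keys g)"

text \<open>Multiplication in S = R[X^{\<pm>1}; alpha]: elements are finitely supported
  functions G_X \<rightarrow> R, and (a g)(b h) = a alpha^g(b) gh.\<close>
definition skew_mult :: "('x \<Rightarrow> 'a::ring_1 \<Rightarrow> 'a) \<Rightarrow> (('x \<Rightarrow>\<^sub>0 int) \<Rightarrow>\<^sub>0 'a)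
    \<Rightarrow> (('x \<Rightarrow>\<^sub>0 int) \<Rightarrow>\<^sub>0 'a) \<Rightarrow> (('x \<Rightarrow>\<^sub>0 int) \<Rightarrow>\<^sub>0 'a)" where
  "skew_mult \<alpha> p q = (\<Sum>g\<in>Poly_Mapping.keys p. \<Sum>h\<in>Poly_Mapping.keys q.
      Poly_Mapping.single (g + h) (Poly_Mapping.lookup p g * alpha_act \<alpha> g (Poly_Mapping.lookup q h)))"

definition skew_sub :: "('x \<Rightarrow>\<^sub>0 int) set \<Rightarrow> (('x \<Rightarrow>\<^sub>0 int) \<Rightarrow>\<^sub>0 'a::zero) set" where
  "skew_sub T = {p. Poly_Mapping.keys p \<subseteq> T}"

end

theory Submission
  imports Defs
begin

(* Order G_X totally and compatibly with addition, lexicographically along a well-order of X.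
   For f, g in A with top exponents m, n and c = r tau, the product f c g has the coefficient
   f_m alpha^m(r) alpha^(m+tau)(g_n) at its top exponent m + tau + n, and alpha^m is onto.
   With tau = 0, primeness of R forces f_m = 0 or g_n = 0.  For semiprimeness take g = f and
   tau = k m: with a = f_m and sigma = alpha^m this gives a R sigma^(k+1)(a) = 0 for all k.
   The left annihilators of {s sigma^k(a) | k >= n} increase with n, so by the ACC they are
   stable from some N on, and then b = sigma^N(a) satisfies b R b = 0, whence a = 0. *)

lemma ring_aut_zero: "ring_aut f \<Longrightarrow> f 0 = 0"
  by (metis add_cancel_right_right ring_aut_def)

lemma ring_aut_mult: "ring_aut f \<Longrightarrow> f (a * b) = f a * f b"
  by (simp add: ring_aut_def)

lemma ring_aut_eq_zero_iff: "ring_aut f \<Longrightarrow> f a = 0 \<longleftrightarrow> a = 0"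
  by (metis bij_is_inj injD ring_aut_def ring_aut_zero)

lemma ring_aut_id: "ring_aut id"
  by (simp add: ring_aut_def)

lemma ring_aut_comp: "ring_aut f \<Longrightarrow> ring_aut g \<Longrightarrow> ring_aut (f \<circ> g)"
  by (simp add: ring_aut_def bij_comp)

lemma ring_aut_inv:
  assumes "ring_aut f"
  shows "ring_aut (inv f)"
proof -
  have f: "bij f" "\<And>a b. f (a + b) = f a + f b" "\<And>a b. f (a * b) = f a * f b" "f 1 = 1"
    using assms by (auto simp: ring_aut_def)
  then have "inv f (a + b) = inv f a + inv f b" "inv f (a * b) = inv f a * inv f b" for a b
    by (auto intro!: inv_f_eq simp: bij_is_inj bij_is_surj surj_f_inv_f)
  moreover have "inv f 1 = 1"
    using f by (simp add: bij_is_inj inv_f_eq)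
  ultimately show ?thesis
    using f(1) by (simp add: ring_aut_def bij_imp_bij_inv)
qed

lemma ring_aut_funpow: "ring_aut f \<Longrightarrow> ring_aut (f ^^ n)"
  by (induction n) (auto simp: ring_aut_id ring_aut_comp)

lemma ring_aut_aut_pow: "ring_aut f \<Longrightarrow> ring_aut (aut_pow f k)"
  by (simp add: aut_pow_def ring_aut_funpow ring_aut_inv)

lemma aut_pow_0 [simp]: "aut_pow f 0 = id"
  by (simp add: aut_pow_def)

lemma aut_pow_add1:
  assumes "bij f"
  shows "aut_pow f (k + 1) = f \<circ> aut_pow f k"
proof (cases "0 \<le> k")
  case True
  then have "nat (k + 1) = Suc (nat k)" by simp
  with True show ?thesis by (simp add: aut_pow_def)
next
  case False
  then have "nat (- k) = Suc (nat (- (k + 1)))" by simp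
  with False show ?thesis
    using surj_iff[THEN iffD1, OF bij_is_surj[OF assms]]
    by (simp add: aut_pow_def comp_assoc[symmetric])
qed

lemma aut_pow_diff1:
  assumes "bij f"
  shows "aut_pow f (k - 1) = inv f \<circ> aut_pow f k"
  using aut_pow_add1[OF assms, of "k - 1"] inv_o_cancel[OF bij_is_inj[OF assms]]
  by (simp add: comp_assoc[symmetric])

lemma aut_pow_add:
  assumes "bij f"
  shows "aut_pow f (k + l) = aut_pow f k \<circ> aut_pow f l"
proof (induction k rule: int_induct[where k = 0])
  case (step1 i)
  then show ?case
    using aut_pow_add1[OF assms, of i] aut_pow_add1[OF assms, of "i + l"]
    by (simp add: ac_simps)
next
  case (step2 i)
  then show ?case
    using aut_pow_diff1[OF assms, of i] aut_pow_diff1[OF assms, of "i + l"]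
    by (simp add: algebra_simps comp_assoc)
qed simp

lemma funpow_commute: "f \<circ> g = g \<circ> f \<Longrightarrow> f ^^ n \<circ> g = g \<circ> f ^^ n"
  by (induction n) (simp_all add: comp_assoc, metis comp_assoc)

lemma inv_commute:
  assumes "bij f" "f \<circ> g = g \<circ> f"
  shows "inv f \<circ> g = g \<circ> inv f"
proof -
  have "inv f \<circ> g = inv f \<circ> g \<circ> (f \<circ> inv f)"
    using surj_iff[THEN iffD1, OF bij_is_surj[OF assms(1)]] by simp
  also have "\<dots> = (inv f \<circ> f) \<circ> g \<circ> inv f"
    using assms(2) by (simp add: comp_assoc)
  also have "\<dots> = g \<circ> inv f"
    using inv_o_cancel[OF bij_is_inj[OF assms(1)]] by simp
  finally show ?thesis .
qed

lemma aut_pow_commute: "bij f \<Longrightarrow> f \<circ> g = g \<circ> f \<Longrightarrow> aut_pow f k \<circ> g = g \<circ> aut_pow f k"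
  by (simp add: aut_pow_def funpow_commute inv_commute)

lemma aut_pow_aut_pow_commute:
  assumes "bij f" "bij g" "f \<circ> g = g \<circ> f"
  shows "aut_pow f k \<circ> aut_pow g l = aut_pow g l \<circ> aut_pow f k"
  using aut_pow_commute[OF assms(2) aut_pow_commute[OF assms(1,3), symmetric]] by simp

definition alpha_act_on :: "('x \<Rightarrow> 'a \<Rightarrow> 'a) \<Rightarrow> ('x \<Rightarrow>\<^sub>0 int) \<Rightarrow> 'x set \<Rightarrow> 'a \<Rightarrow> 'a" where
  "alpha_act_on \<alpha> g K = Finite_Set.fold (\<lambda>x f. aut_pow (\<alpha> x) (Poly_Mapping.lookup g x) \<circ> f) id K"

lemma alpha_act_eq_on_keys: "alpha_act \<alpha> g = alpha_act_on \<alpha> g (Poly_Mapping.keys g)"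
  by (simp add: alpha_act_def alpha_act_on_def)

locale commuting_ring_auts =
  fixes \<alpha> :: "'x \<Rightarrow> 'a::ring_1 \<Rightarrow> 'a"
  assumes ring_aut_alpha: "\<And>x. ring_aut (\<alpha> x)"
    and alpha_commute: "\<And>x y. \<alpha> x \<circ> \<alpha> y = \<alpha> y \<circ> \<alpha> x"
begin

lemma bij_alpha: "bij (\<alpha> x)"
  using ring_aut_alpha by (simp add: ring_aut_def)

lemma aut_pow_commute_pointwise:
  "aut_pow (\<alpha> x) k (aut_pow (\<alpha> y) l a) = aut_pow (\<alpha> y) l (aut_pow (\<alpha> x) k a)"
  using aut_pow_aut_pow_commute[OF bij_alpha bij_alpha alpha_commute] by (simp add: fun_eq_iff)

lemma alpha_act_on_empty [simp]: "alpha_act_on \<alpha> g {} = id"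
  by (simp add: alpha_act_on_def)

lemma alpha_act_on_insert:
  assumes "finite K" "x \<notin> K"
  shows "alpha_act_on \<alpha> g (insert x K) =
    aut_pow (\<alpha> x) (Poly_Mapping.lookup g x) \<circ> alpha_act_on \<alpha> g K"
proof -
  interpret comp_fun_commute_on UNIV "\<lambda>x f. aut_pow (\<alpha> x) (Poly_Mapping.lookup g x) \<circ> f"
    by standard (simp add: fun_eq_iff aut_pow_commute_pointwise)
  show ?thesis
    using assms by (simp add: alpha_act_on_def)
qed

lemma alpha_act_on_commute:
  "finite K \<Longrightarrow> aut_pow (\<alpha> y) l (alpha_act_on \<alpha> g K a) = alpha_act_on \<alpha> g K (aut_pow (\<alpha> y) l a)"
  by (induction K arbitrary: a rule: finite_induct)
    (simp_all add: alpha_act_on_insert aut_pow_commute_pointwise)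

lemma alpha_act_on_add:
  "finite K \<Longrightarrow> alpha_act_on \<alpha> (g + h) K a = alpha_act_on \<alpha> g K (alpha_act_on \<alpha> h K a)"
  by (induction K arbitrary: a rule: finite_induct)
    (simp_all add: alpha_act_on_insert lookup_add aut_pow_add[OF bij_alpha] alpha_act_on_commute)

lemma alpha_act_on_superset:
  assumes "finite K" "Poly_Mapping.keys g \<subseteq> K"
  shows "alpha_act_on \<alpha> g K = alpha_act \<alpha> g"
proof -
  have "alpha_act_on \<alpha> g (Poly_Mapping.keys g \<union> J) = alpha_act_on \<alpha> g (Poly_Mapping.keys g)"
    if "finite J" "J \<inter> Poly_Mapping.keys g = {}" for J
    using that
  proof (induction J rule: finite_induct)
    case (insert x J)
    then have "x \<notin> Poly_Mapping.keys g \<union> J" "Poly_Mapping.lookup g x = 0"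
      by (auto simp: in_keys_iff)
    with insert show ?case
      by (simp add: alpha_act_on_insert)
  qed simp
  from this[of "K - Poly_Mapping.keys g"] assms show ?thesis
    by (simp add: alpha_act_eq_on_keys Un_absorb1 Int_commute)
qed

lemma alpha_act_add: "alpha_act \<alpha> (g + h) = alpha_act \<alpha> g \<circ> alpha_act \<alpha> h"
proof -
  let ?K = "Poly_Mapping.keys g \<union> Poly_Mapping.keys h"
  have "Poly_Mapping.keys (g + h) \<subseteq> ?K"
    by (rule keys_add)
  then show ?thesis
    using alpha_act_on_add[of ?K g h] by (simp add: alpha_act_on_superset fun_eq_iff)
qed

lemma alpha_act_zero [simp]: "alpha_act \<alpha> 0 = id"
  by (simp add: alpha_act_def)

lemma alpha_act_iterate: "alpha_act \<alpha> (((+) g ^^ n) 0) = alpha_act \<alpha> g ^^ n"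
  by (induction n) (simp_all add: alpha_act_add)

lemma ring_aut_alpha_act_on: "finite K \<Longrightarrow> ring_aut (alpha_act_on \<alpha> g K)"
proof (induction K rule: finite_induct)
  case (insert x K)
  then show ?case
    unfolding alpha_act_on_insert[OF insert(1,2)]
    by (intro ring_aut_comp ring_aut_aut_pow ring_aut_alpha)
qed (simp only: alpha_act_on_empty ring_aut_id)

lemma ring_aut_alpha_act: "ring_aut (alpha_act \<alpha> g)"
  by (simp add: alpha_act_eq_on_keys ring_aut_alpha_act_on)

lemma surj_alpha_act: "surj (alpha_act \<alpha> g)"
  using ring_aut_alpha_act by (simp add: ring_aut_def bij_is_surj)

end

lemma eq_zero_if_orbit_products_vanish:
  fixes a :: "'a::ring_1"
  assumes acc: "acc_left_ann TYPE('a)" and semiprime: "semiprime_ring_on (UNIV :: 'a set) (*) 0"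
    and \<sigma>: "ring_aut \<sigma>" and vanish: "\<And>s k. a * s * (\<sigma> ^^ Suc k) a = 0"
  shows "a = 0"
proof -
  define S where "S n = {s * (\<sigma> ^^ k) a | s k. n \<le> k}" for n
  define C where "C n = left_ann (S n)" for n
  have "S (Suc n) \<subseteq> S n" for n
    unfolding S_def by (auto dest: Suc_leD)
  then have "C n \<subseteq> C (Suc n)" for n
    unfolding C_def left_ann_def by blast
  moreover have "\<exists>T. C n = left_ann T" for n
    unfolding C_def by blast
  ultimately obtain N where "\<forall>n\<ge>N. C n = C N"
    using acc unfolding acc_left_ann_def by blast
  then have N: "C (Suc N) = C N"
    using le_SucI by blast
  define b where "b = (\<sigma> ^^ N) a"
  have \<sigma>N: "ring_aut (\<sigma> ^^ N)"
    using \<sigma> by (rule ring_aut_funpow)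
  have "b * c \<in> C (Suc N)" for c
    unfolding C_def S_def left_ann_def
  proof clarify
    fix s k
    assume "Suc N \<le> k"
    then obtain j where k: "k = N + Suc j"
      by (auto elim: less_eqE)
    obtain u where u: "c * s = (\<sigma> ^^ N) u"
      using \<sigma>N unfolding ring_aut_def by (meson bij_is_surj surjE)
    have "(\<sigma> ^^ k) a = (\<sigma> ^^ N) ((\<sigma> ^^ Suc j) a)"
      unfolding k funpow_add by simp
    then have "b * c * (s * (\<sigma> ^^ k) a) = (\<sigma> ^^ N) a * (\<sigma> ^^ N) u * (\<sigma> ^^ N) ((\<sigma> ^^ Suc j) a)"
      by (simp add: b_def mult.assoc flip: u)
    also have "\<dots> = (\<sigma> ^^ N) (a * u * (\<sigma> ^^ Suc j) a)"
      by (simp add: ring_aut_mult[OF \<sigma>N])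
    also have "\<dots> = 0"
      by (simp only: vanish ring_aut_zero[OF \<sigma>N])
    finally show "b * c * (s * (\<sigma> ^^ k) a) = 0" .
  qed
  then have "b * c \<in> C N" for c
    by (simp only: N)
  moreover have "b \<in> S N"
    unfolding S_def b_def by (intro CollectI exI[of _ 1] exI[of _ N]) simp
  ultimately have "b * c * b = 0" for c
    by (simp add: C_def left_ann_def)
  then have "b = 0"
    using semiprime unfolding semiprime_ring_on_def by blast
  then show "a = 0"
    using ring_aut_eq_zero_iff[OF \<sigma>N] by (simp add: b_def)
qed

locale linear_group_order =
  fixes less :: "'g::ab_group_add \<Rightarrow> 'g \<Rightarrow> bool" (infix "\<prec>" 50)
  assumes less_irrefl: "\<not> u \<prec> u"
    and less_trans: "u \<prec> v \<Longrightarrow> v \<prec> w \<Longrightarrow> u \<prec> w"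
    and less_linear: "u \<noteq> v \<Longrightarrow> u \<prec> v \<or> v \<prec> u"
    and add_right_strict_mono: "u \<prec> v \<Longrightarrow> u + w \<prec> v + w"
begin

abbreviation less_or_eq (infix "\<preceq>" 50) where
  "u \<preceq> v \<equiv> u = v \<or> u \<prec> v"

lemma add_left_strict_mono: "u \<prec> v \<Longrightarrow> w + u \<prec> w + v"
  using add_right_strict_mono by (simp add: add.commute)

lemma add_right_mono: "u \<preceq> v \<Longrightarrow> u + w \<preceq> v + w"
  using add_right_strict_mono by blast

lemma add_eq_add_of_bounded:
  assumes "g \<preceq> m" "h \<preceq> n" "g + h = m + n"
  shows "g = m \<and> h = n"
proof (rule ccontr)
  assume "\<not> (g = m \<and> h = n)"
  then have "g + h \<prec> m + n"
  proof (cases "g = m")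
    case True
    then show ?thesis
      using \<open>\<not> (g = m \<and> h = n)\<close> assms(2) add_left_strict_mono by auto
  next
    case False
    then have "g + h \<prec> m + h"
      using assms(1) add_right_strict_mono by simp
    moreover have "m + h \<preceq> m + n"
      using assms(2) add_left_strict_mono by blast
    ultimately show ?thesis
      using less_trans by metis
  qed
  with assms(3) less_irrefl show False
    by simp
qed

lemma finite_has_greatest:
  assumes "finite K" "K \<noteq> {}"
  shows "\<exists>m\<in>K. \<forall>k\<in>K. k \<preceq> m"
proof -
  let ?r = "{(k, m). k \<in> K \<and> m \<in> K \<and> k \<prec> m}"
  have "finite ?r"
    using assms(1) by (auto intro: finite_subset[of _ "K \<times> K"])
  moreover have "trans ?r"
    using less_trans by (auto intro: transI)
  then have "acyclic ?r"
    using less_irrefl by (simp add: acyclic_def trancl_id)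
  ultimately have "wf (?r\<inverse>)"
    by (rule finite_acyclic_wf_converse)
  moreover obtain k where "k \<in> K"
    using assms(2) by blast
  ultimately obtain m where "m \<in> K" and "\<And>k. (k, m) \<in> ?r\<inverse> \<Longrightarrow> k \<notin> K"
    by (rule wfE_min) blast
  then show ?thesis
    using less_linear by blast
qed

lemma greatest_key_exists:
  "p \<noteq> 0 \<Longrightarrow> \<exists>m\<in>Poly_Mapping.keys p. \<forall>g\<in>Poly_Mapping.keys p. g \<preceq> m"
  by (simp add: finite_has_greatest)

end

definition lex_less :: "'x rel \<Rightarrow> ('x \<Rightarrow>\<^sub>0 'b::{zero, ord}) \<Rightarrow> ('x \<Rightarrow>\<^sub>0 'b) \<Rightarrow> bool" where
  "lex_less r u v \<longleftrightarrow> (\<exists>x. Poly_Mapping.lookup u x < Poly_Mapping.lookup v x \<and>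
      (\<forall>y. (y, x) \<in> r \<longrightarrow> Poly_Mapping.lookup u y = Poly_Mapping.lookup v y))"

lemma lex_less_irrefl: "\<not> lex_less r u (u :: 'x \<Rightarrow>\<^sub>0 'b::{zero, preorder})"
  by (simp add: lex_less_def)

lemma lex_less_trans:
  fixes u v w :: "'x \<Rightarrow>\<^sub>0 'b::{zero, order}"
  assumes "trans r" "total r" "lex_less r u v" "lex_less r v w"
  shows "lex_less r u w"
proof -
  obtain x where x: "Poly_Mapping.lookup u x < Poly_Mapping.lookup v x"
    "\<And>z. (z, x) \<in> r \<Longrightarrow> Poly_Mapping.lookup u z = Poly_Mapping.lookup v z"
    using assms(3) unfolding lex_less_def by blast
  obtain y where y: "Poly_Mapping.lookup v y < Poly_Mapping.lookup w y"
    "\<And>z. (z, y) \<in> r \<Longrightarrow> Poly_Mapping.lookup v z = Poly_Mapping.lookup w z"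
    using assms(4) unfolding lex_less_def by blast
  consider "x = y" | "(x, y) \<in> r" | "(y, x) \<in> r"
    using assms(2) by (auto simp: total_on_def)
  then show ?thesis
  proof cases
    case 1
    with x y show ?thesis
      unfolding lex_less_def by (metis order.strict_trans)
  next
    case 2
    have "Poly_Mapping.lookup u x < Poly_Mapping.lookup w x"
      using x(1) y(2)[OF 2] by simp
    moreover have "Poly_Mapping.lookup u z = Poly_Mapping.lookup w z" if "(z, x) \<in> r" for z
      using x(2)[OF that] y(2)[OF transD[OF assms(1) that 2]] by simp
    ultimately show ?thesis
      unfolding lex_less_def by blast
  next
    case 3
    have "Poly_Mapping.lookup u y < Poly_Mapping.lookup w y"
      using x(2)[OF 3] y(1) by simp
    moreover have "Poly_Mapping.lookup u z = Poly_Mapping.lookup w z" if "(z, y) \<in> r" for z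
      using x(2)[OF transD[OF assms(1) that 3]] y(2)[OF that] by simp
    ultimately show ?thesis
      unfolding lex_less_def by blast
  qed
qed

lemma lex_less_total:
  fixes u v :: "'x \<Rightarrow>\<^sub>0 'b::{zero, linorder}"
  assumes "wf r" "u \<noteq> v"
  shows "lex_less r u v \<or> lex_less r v u"
proof -
  let ?D = "{x. Poly_Mapping.lookup u x \<noteq> Poly_Mapping.lookup v x}"
  obtain x0 where "x0 \<in> ?D"
    using assms(2) by (auto intro: poly_mapping_eqI)
  then obtain x where "x \<in> ?D" and below: "\<And>y. (y, x) \<in> r \<Longrightarrow> y \<notin> ?D"
    by (rule wfE_min[OF assms(1)]) blast
  then consider "Poly_Mapping.lookup u x < Poly_Mapping.lookup v x"
    | "Poly_Mapping.lookup v x < Poly_Mapping.lookup u x"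
    by (auto simp: neq_iff)
  then show ?thesis
  proof cases
    case 1
    then have "lex_less r u v"
      unfolding lex_less_def using below by (intro exI[of _ x]) auto
    then show ?thesis ..
  next
    case 2
    then have "lex_less r v u"
      unfolding lex_less_def using below by (intro exI[of _ x]) auto
    then show ?thesis ..
  qed
qed

lemma lex_less_add_right:
  fixes u v w :: "'x \<Rightarrow>\<^sub>0 'b::ordered_cancel_comm_monoid_add"
  assumes "lex_less r u v"
  shows "lex_less r (u + w) (v + w)"
proof -
  obtain x where x: "Poly_Mapping.lookup u x < Poly_Mapping.lookup v x"
    "\<And>y. (y, x) \<in> r \<Longrightarrow> Poly_Mapping.lookup u y = Poly_Mapping.lookup v y"
    using assms unfolding lex_less_def by blast
  have "Poly_Mapping.lookup u x + Poly_Mapping.lookup w x <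
      Poly_Mapping.lookup v x + Poly_Mapping.lookup w x"
    using x(1) by (rule add_strict_right_mono)
  moreover have "Poly_Mapping.lookup u y + Poly_Mapping.lookup w y =
      Poly_Mapping.lookup v y + Poly_Mapping.lookup w y" if "(y, x) \<in> r" for y
    using x(2)[OF that] by simp
  ultimately show ?thesis
    unfolding lex_less_def lookup_add by blast
qed

lemma linear_group_order_lex_less:
  assumes "wf r" "trans r" "total r"
  shows "linear_group_order (lex_less r :: ('x \<Rightarrow>\<^sub>0 'b::linordered_ab_group_add) \<Rightarrow> _)"
proof
  fix u v w :: "'x \<Rightarrow>\<^sub>0 'b"
  show "\<not> lex_less r u u"
    by (rule lex_less_irrefl)
  show "lex_less r u w" if "lex_less r u v" "lex_less r v w"
    using lex_less_trans[OF assms(2,3) that] .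
  show "lex_less r u v \<or> lex_less r v u" if "u \<noteq> v"
    using lex_less_total[OF assms(1) that] .
  show "lex_less r (u + w) (v + w)" if "lex_less r u v"
    using lex_less_add_right[OF that] .
qed

lemma linear_group_order_exists:
  "\<exists>less. linear_group_order (less :: ('x \<Rightarrow>\<^sub>0 'b::linordered_ab_group_add) \<Rightarrow> _)"
proof -
  obtain r :: "'x rel" where "well_order_on UNIV r"
    using well_order_on by blast
  then have "wf (r - Id)" "strict_linear_order_on UNIV (r - Id)"
    by (auto simp: well_order_on_def intro: strict_linear_order_on_diff_Id)
  then have "linear_group_order (lex_less (r - Id) :: ('x \<Rightarrow>\<^sub>0 'b) \<Rightarrow> _)"
    by (intro linear_group_order_lex_less) (simp_all add: strict_linear_order_on_def)
  then show ?thesis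
    by blast
qed

lemma lookup_skew_mult:
  "Poly_Mapping.lookup (skew_mult \<alpha> p q) k =
    (\<Sum>g\<in>Poly_Mapping.keys p. \<Sum>h\<in>Poly_Mapping.keys q.
      if g + h = k then Poly_Mapping.lookup p g * alpha_act \<alpha> g (Poly_Mapping.lookup q h) else 0)"
  by (simp add: skew_mult_def lookup_sum lookup_single when_def)

lemma keys_skew_mult:
  fixes \<alpha> :: "'x \<Rightarrow> 'a::ring_1 \<Rightarrow> 'a"
  shows "Poly_Mapping.keys (skew_mult \<alpha> p q) \<subseteq>
    (\<Union>g\<in>Poly_Mapping.keys p. \<Union>h\<in>Poly_Mapping.keys q. {g + h})"
proof -
  have inner: "Poly_Mapping.keys (\<Sum>h\<in>Poly_Mapping.keys q. Poly_Mapping.single (g + h) (c h))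
      \<subseteq> (\<Union>h\<in>Poly_Mapping.keys q. {g + h})"
    for g and c :: "_ \<Rightarrow> 'a"
    using keys_sum[of "\<lambda>h. Poly_Mapping.single (g + h) (c h)" "Poly_Mapping.keys q"] by auto
  show ?thesis
    unfolding skew_mult_def
    by (rule order_trans[OF keys_sum], rule UN_mono, rule order_refl, rule inner)
qed

locale ordered_skew_laurent = commuting_ring_auts \<alpha> + linear_group_order less
  for \<alpha> :: "'x \<Rightarrow> 'a::ring_1 \<Rightarrow> 'a" and less :: "('x \<Rightarrow>\<^sub>0 int) \<Rightarrow> ('x \<Rightarrow>\<^sub>0 int) \<Rightarrow> bool"
    (infix "\<prec>" 50)
begin

lemma lookup_skew_mult_top:
  assumes "\<forall>g\<in>Poly_Mapping.keys p. g \<preceq> m" "\<forall>h\<in>Poly_Mapping.keys q. h \<preceq> n"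
  shows "Poly_Mapping.lookup (skew_mult \<alpha> p q) (m + n) =
    Poly_Mapping.lookup p m * alpha_act \<alpha> m (Poly_Mapping.lookup q n)"
proof -
  let ?c = "\<lambda>g h. Poly_Mapping.lookup p g * alpha_act \<alpha> g (Poly_Mapping.lookup q h)"
  have "g + h = m + n \<longleftrightarrow> g = m \<and> h = n"
    if "g \<in> Poly_Mapping.keys p" "h \<in> Poly_Mapping.keys q" for g h
    using assms that add_eq_add_of_bounded by blast
  then have "Poly_Mapping.lookup (skew_mult \<alpha> p q) (m + n) =
      (\<Sum>g\<in>Poly_Mapping.keys p.
        if g = m then \<Sum>h\<in>Poly_Mapping.keys q. if h = n then ?c g h else 0 else 0)"
    unfolding lookup_skew_mult by (intro sum.cong refl) auto
  also have "\<dots> = ?c m n"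
    by (simp add: in_keys_iff ring_aut_zero[OF ring_aut_alpha_act])
  finally show ?thesis .
qed

lemma lookup_skew_mult_triple_top:
  assumes "\<forall>g\<in>Poly_Mapping.keys p. g \<preceq> m" "\<forall>h\<in>Poly_Mapping.keys q. h \<preceq> n"
  shows "Poly_Mapping.lookup (skew_mult \<alpha> (skew_mult \<alpha> p (Poly_Mapping.single t r)) q) (m + t + n) =
    Poly_Mapping.lookup p m * alpha_act \<alpha> m r * alpha_act \<alpha> (m + t) (Poly_Mapping.lookup q n)"
proof -
  have single_top: "\<forall>h\<in>Poly_Mapping.keys (Poly_Mapping.single t r). h \<preceq> t"
    by simp
  have product_top: "\<forall>k\<in>Poly_Mapping.keys (skew_mult \<alpha> p (Poly_Mapping.single t r)). k \<preceq> m + t"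
    using keys_skew_mult[of \<alpha> p "Poly_Mapping.single t r"] assms(1) add_right_mono
    by (fastforce split: if_splits)
  show ?thesis
    using lookup_skew_mult_top[OF product_top assms(2)] lookup_skew_mult_top[OF assms(1) single_top]
    by simp
qed

lemma prime_skew_sub:
  assumes prime: "prime_ring_on (UNIV :: 'a set) (*) 0" and "0 \<in> T"
  shows "prime_ring_on (skew_sub T) (skew_mult \<alpha>) 0"
  unfolding prime_ring_on_def
proof (intro ballI impI)
  fix p q
  assume vanish: "\<forall>c\<in>skew_sub T. skew_mult \<alpha> (skew_mult \<alpha> p c) q = 0"
  show "p = 0 \<or> q = 0"
  proof (rule ccontr)
    assume "\<not> (p = 0 \<or> q = 0)"
    then obtain m n where m: "m \<in> Poly_Mapping.keys p" "\<forall>g\<in>Poly_Mapping.keys p. g \<preceq> m"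
      and n: "n \<in> Poly_Mapping.keys q" "\<forall>h\<in>Poly_Mapping.keys q. h \<preceq> n"
      using greatest_key_exists by meson
    have "Poly_Mapping.lookup p m * s * alpha_act \<alpha> m (Poly_Mapping.lookup q n) = 0" for s
    proof -
      obtain r where r: "s = alpha_act \<alpha> m r"
        using surj_alpha_act by (rule surjE)
      have "Poly_Mapping.single 0 r \<in> skew_sub T"
        using \<open>0 \<in> T\<close> by (simp add: skew_sub_def)
      with vanish have
        "Poly_Mapping.lookup (skew_mult \<alpha> (skew_mult \<alpha> p (Poly_Mapping.single 0 r)) q) (m + 0 + n) = 0"
        by simp
      then show ?thesis
        using lookup_skew_mult_triple_top[OF m(2) n(2), of 0 r] by (simp add: r)
    qed
    then have "Poly_Mapping.lookup p m = 0 \<or> alpha_act \<alpha> m (Poly_Mapping.lookup q n) = 0"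
      using prime unfolding prime_ring_on_def by blast
    with m(1) n(1) show False
      by (simp add: in_keys_iff ring_aut_eq_zero_iff[OF ring_aut_alpha_act])
  qed
qed

lemma semiprime_skew_sub:
  assumes acc: "acc_left_ann TYPE('a)" and semiprime: "semiprime_ring_on (UNIV :: 'a set) (*) 0"
    and "0 \<in> T" and add_closed: "\<And>s t. s \<in> T \<Longrightarrow> t \<in> T \<Longrightarrow> s + t \<in> T"
  shows "semiprime_ring_on (skew_sub T) (skew_mult \<alpha>) 0"
  unfolding semiprime_ring_on_def
proof (intro ballI impI)
  fix p
  assume "p \<in> skew_sub T" and vanish: "\<forall>c\<in>skew_sub T. skew_mult \<alpha> (skew_mult \<alpha> p c) p = 0"
  show "p = 0"
  proof (rule ccontr)
    assume "p \<noteq> 0"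
    then obtain m where m: "m \<in> Poly_Mapping.keys p" "\<forall>g\<in>Poly_Mapping.keys p. g \<preceq> m"
      using greatest_key_exists by blast
    with \<open>p \<in> skew_sub T\<close> have "m \<in> T"
      by (auto simp: skew_sub_def)
    define \<sigma> where "\<sigma> = alpha_act \<alpha> m"
    have "Poly_Mapping.lookup p m * s * (\<sigma> ^^ Suc k) (Poly_Mapping.lookup p m) = 0" for s k
    proof -
      define t where "t = ((+) m ^^ k) 0" \<comment> \<open>t = k m, so that alpha^(m + t) = sigma^(k + 1)\<close>
      have "t \<in> T"
        unfolding t_def using \<open>0 \<in> T\<close> \<open>m \<in> T\<close> add_closed by (induction k) auto
      obtain r where r: "s = \<sigma> r"
        unfolding \<sigma>_def using surj_alpha_act by (rule surjE)
      have "Poly_Mapping.single t r \<in> skew_sub T"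
        using \<open>t \<in> T\<close> by (simp add: skew_sub_def)
      with vanish have
        "Poly_Mapping.lookup (skew_mult \<alpha> (skew_mult \<alpha> p (Poly_Mapping.single t r)) p) (m + t + m) = 0"
        by simp
      moreover have "alpha_act \<alpha> (m + t) = \<sigma> ^^ Suc k"
        using alpha_act_iterate[where g = m and n = "Suc k"] by (simp add: t_def \<sigma>_def)
      ultimately show ?thesis
        using lookup_skew_mult_triple_top[OF m(2) m(2), of t r] by (simp add: r \<sigma>_def)
    qed
    then have "Poly_Mapping.lookup p m = 0"
      using eq_zero_if_orbit_products_vanish[OF acc semiprime] ring_aut_alpha_act
      unfolding \<sigma>_def by blast
    with m(1) show False
      by (simp add: in_keys_iff)
  qed
qed

end

theorem mainTheorem6:
  fixes \<alpha> :: "'x \<Rightarrow> 'a::ring_1 \<Rightarrow> 'a"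
    and T :: "('x \<Rightarrow>\<^sub>0 int) set"
  assumes acc: "acc_left_ann TYPE('a)"
    and aut: "\<And>x. ring_aut (\<alpha> x)"
    and comm: "\<And>x y. \<alpha> x \<circ> \<alpha> y = \<alpha> y \<circ> \<alpha> x"
    and T0: "0 \<in> T"
    and Tadd: "\<And>s t. s \<in> T \<Longrightarrow> t \<in> T \<Longrightarrow> s + t \<in> T"
  shows "(prime_ring_on (UNIV :: 'a set) (*) 0
            \<longrightarrow> prime_ring_on (skew_sub T) (skew_mult \<alpha>) 0)
       \<and> (semiprime_ring_on (UNIV :: 'a set) (*) 0
            \<longrightarrow> semiprime_ring_on (skew_sub T) (skew_mult \<alpha>) 0)"
proof -
  obtain less :: "('x \<Rightarrow>\<^sub>0 int) \<Rightarrow> ('x \<Rightarrow>\<^sub>0 int) \<Rightarrow> bool"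
    where "linear_group_order less"
    using linear_group_order_exists by blast
  then interpret ordered_skew_laurent \<alpha> less
    using aut comm by (intro ordered_skew_laurent.intro commuting_ring_auts.intro)
  show ?thesis
    using prime_skew_sub[OF _ T0] semiprime_skew_sub[OF acc _ T0 Tadd] by blast
qed

end
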